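(* Let $n\ge 2$ and $T=n$, and consider the following VOM instance: $J=\{1,\dots,n\}$; each $j\in J$ has exactly $n$ neighbors, and the neighborhoods $\mathcal N_j$ are pairwise disjoint except that they all contain one common offline agent $i^*$ (so $|I|=n(n-1)+1$, $i^*$ is adjacent to all of $J$, and every $i\ne i^*$ has exactly one neighbor). Weights: $w_{i^*}=1$ and $w_i=n^{-3}$ for $i\ne i^*$. For $n$ sufficiently large, the vector $x_{ij}=1/n$ for all $(i,j)\in E$ is an optimal solution of LP-VOM with value $1+n^{-2}-n^{-3}$, and SAMP-B run with this $x$ achieves expected total weight $\sum_i w_i\mathbb E[Z_i]$ at most $\big(1-1/e+O(\ln n/n)\big)$ times the LP-VOM optimum. In particular SAMP-B cannot achieve a competitive ratio exceeding $1-1/e$ for VOM.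
   Context: Model. An instance consists of a finite bipartite graph $(I,J,E)$, where $I$ is the set of offline agents and $J$ the set of online agent types, with $|J|=T$, together with weights $w_i\ge 0$. For $i\in I$ let $\mathcal N_i=\{j\in J:(i,j)\in E\}$ and for $j\in J$ let $\mathcal N_j=\{i\in I:(i,j)\in E\}$; write $i\sim j$ (equivalently $j\sim i$) when $(i,j)\in E$. There are $T$ rounds $t=1,\dots,T$; in each round exactly one online agent arrives, whose type is drawn uniformly at random from $J$ (each type with probability $1/T$), independently across rounds. Each offline agent can be matched at most once. When an online agent of type $j$ arrives, an online algorithm must immediately and irrevocably either reject it or match it to a currently unmatched $i\in\mathcal N_j$. Let $Z_i$ be the indicator that offline agent $i$ is matched by the end. VOM maximizes $\sum_{i\in I}w_i\mathbb E[Z_i]$. Benchmark LP. Fix an integer constant $K\ge 1$ independent of $T$. Variables $x_{ij}\ge 0$ for $(i,j)\in E$, with constraints (C1) $\sum_{i\sim j}x_{ij}\le 1$ for all $j\in J$; (C2) $\sum_{j\sim i}x_{ij}\le 1$ for all $i\in I$; (C3) $\sum_{j\in S}x_{ij}\le 1-e^{-|S|}$ for all $i\in I$ and all $S\subseteq\mathcal N_i$ with $|S|\le K$. LP-VOM maximizes $\sum_{i\in I}w_i\sum_{j\sim i}x_{ij}$ subject to (C1)–(C3). SAMP-B (sampling with boosting), given a nonnegative vector $x=(x_{ij})_{(i,j)\in E}$: in each round $t$, when an online agent of type $j$ arrives, let $\mathcal N_{j,t}$ be the set of neighbors of $j$ that are unmatched at the beginning of round $t$; if $\mathcal N_{j,t}=\emptyset$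 (or $\sum_{i'\in\mathcal N_{j,t}}x_{i'j}=0$) reject; otherwise match $j$ to $i\in\mathcal N_{j,t}$ chosen with probability $x_{ij}/\sum_{i'\in\mathcal N_{j,t}}x_{i'j}$. *)

theory Defs
  imports Complex_Main
begin

text \<open>An instance: offline agents I, online types J, edge set E \<subseteq> I \<times> J, weights w.
  A vector x is a function on pairs; only its values on E matter.\<close>

definition nbr_off :: "('i \<times> 'j) set \<Rightarrow> 'j \<Rightarrow> 'i set" where
  "nbr_off E j = {i. (i, j) \<in> E}"

definition nbr_on :: "('i \<times> 'j) set \<Rightarrow> 'i \<Rightarrow> 'j set" where
  "nbr_on E i = {j. (i, j) \<in> E}"

definition lp_feasible :: "nat \<Rightarrow> 'i set \<Rightarrow> 'j set \<Rightarrow> ('i \<times> 'j) set \<Rightarrow> ('i \<Rightarrow> 'j \<Rightarrow> real) \<Rightarrow> bool" where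
  "lp_feasible K I J E x \<longleftrightarrow>
     (\<forall>(i, j) \<in> E. x i j \<ge> 0) \<and>
     (\<forall>j \<in> J. (\<Sum>i \<in> nbr_off E j. x i j) \<le> 1) \<and>
     (\<forall>i \<in> I. (\<Sum>j \<in> nbr_on E i. x i j) \<le> 1) \<and>
     (\<forall>i \<in> I. \<forall>S. S \<subseteq> nbr_on E i \<and> card S \<le> K \<longrightarrow>
          (\<Sum>j \<in> S. x i j) \<le> 1 - exp (- real (card S)))"

definition lp_obj :: "'i set \<Rightarrow> ('i \<times> 'j) set \<Rightarrow> ('i \<Rightarrow> real) \<Rightarrow> ('i \<Rightarrow> 'j \<Rightarrow> real) \<Rightarrow> real" where
  "lp_obj I E w x = (\<Sum>i \<in> I. w i * (\<Sum>j \<in> nbr_on E i. x i j))"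

definition lp_optimal :: "nat \<Rightarrow> 'i set \<Rightarrow> 'j set \<Rightarrow> ('i \<times> 'j) set \<Rightarrow> ('i \<Rightarrow> real) \<Rightarrow> ('i \<Rightarrow> 'j \<Rightarrow> real) \<Rightarrow> bool" where
  "lp_optimal K I J E w x \<longleftrightarrow> lp_feasible K I J E x \<and>
     (\<forall>y. lp_feasible K I J E y \<longrightarrow> lp_obj I E w y \<le> lp_obj I E w x)"

text \<open>Expected final matched weight of SAMP-B. sampB_exp J E w x t M is the expected value of
  the total weight of matched offline agents at the end, given that M is the set of matched
  offline agents and t rounds remain; each round the arriving type is uniform on J
  (probability 1 / card J each).\<close>
fun sampB_exp :: "'j set \<Rightarrow> ('i \<times> 'j) set \<Rightarrow> ('i \<Rightarrow> real) \<Rightarrow> ('i \<Rightarrow> 'j \<Rightarrow> real)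
                  \<Rightarrow> nat \<Rightarrow> 'i set \<Rightarrow> real" where
  "sampB_exp J E w x 0 M = (\<Sum>i \<in> M. w i)"
| "sampB_exp J E w x (Suc t) M =
     (\<Sum>j \<in> J. (let N = nbr_off E j - M; S = (\<Sum>i' \<in> N. x i' j) in
        if N = {} \<or> S = 0 then sampB_exp J E w x t M
        else (\<Sum>i \<in> N. (x i j / S) * sampB_exp J E w x t (insert i M)))) / real (card J)"

definition sampB_value :: "'j set \<Rightarrow> ('i \<times> 'j) set \<Rightarrow> ('i \<Rightarrow> real) \<Rightarrow> ('i \<Rightarrow> 'j \<Rightarrow> real) \<Rightarrow> real" where
  "sampB_value J E w x = sampB_exp J E w x (card J) {}"

text \<open>Offline agents: None is i*, Some (j, k) with k \<in> {1..n-1} is the k-th private neighbour of j.\<close>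
definition inst_I :: "nat \<Rightarrow> (nat \<times> nat) option set" where
  "inst_I n = insert None {Some (j, k) | j k. j \<in> {1..n} \<and> k \<in> {1..n - 1}}"

definition inst_J :: "nat \<Rightarrow> nat set" where
  "inst_J n = {1..n}"

definition inst_E :: "nat \<Rightarrow> ((nat \<times> nat) option \<times> nat) set" where
  "inst_E n = {(None, j) | j. j \<in> {1..n}} \<union>
              {(Some (j, k), j) | j k. j \<in> {1..n} \<and> k \<in> {1..n - 1}}"

definition inst_w :: "nat \<Rightarrow> (nat \<times> nat) option \<Rightarrow> real" where
  "inst_w n i = (if i = None then 1 else 1 / real n ^ 3)"

definition inst_x :: "nat \<Rightarrow> (nat \<times> nat) option \<Rightarrow> nat \<Rightarrow> real" where
  "inst_x n i j = 1 / real n"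

end

theory Submission
  imports Defs
begin

text \<open>Run SAMP-B with x = 1/n and split the weight into the hub indicator and the private
  weights n^-3. The private agents contribute at most n^-3 per round, i.e. n^-2 in total.
  An arriving type j with m_j matched private neighbours offers the hub with probability
  1/(n - m_j) = 1/n + f(m_j)/n^2, where f(m) = nm/(n - m). A potential argument shows that the
  hub survives t more rounds with probability at least (1 - 1/n)^t - E_t - D_t S, where
  S = f(m_1) + ... + f(m_n) and D, E absorb the increase of S by at most 1 + 2 f(m_j) per
  private match; both are O(1/n) at t = n. Hence SAMP-B earns at most 1 - 1/e + O(1/n). On the
  LP side, (C1) at each type bounds the private mass by n minus the hub mass, which is at most 1
  by (C2), so x attains the optimum 1 + n^-2 - n^-3.\<close>

section \<open>SAMP-B on general instances\<close>

lemma sampB_exp_add: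
  "sampB_exp J E (\<lambda>i. v i + w i) x t M = sampB_exp J E v x t M + sampB_exp J E w x t M"
proof (induction t arbitrary: M)
  case (Suc t)
  show ?case
    unfolding sampB_exp.simps add_divide_distrib[symmetric] sum.distrib[symmetric]
    by (intro arg_cong[where f = "\<lambda>s. s / _"] sum.cong)
      (simp_all add: Let_def Suc sum.distrib distrib_left)
qed (simp add: sum.distrib)

lemma weighted_mean_le:
  fixes a v :: "'a \<Rightarrow> real"
  assumes "\<And>i. i \<in> N \<Longrightarrow> 0 \<le> a i" "(\<Sum>i\<in>N. a i) \<noteq> 0"
    and "\<And>i. i \<in> N \<Longrightarrow> v i \<le> B"
  shows "(\<Sum>i\<in>N. a i / (\<Sum>i\<in>N. a i) * v i) \<le> B"
proof -
  define S where "S = (\<Sum>i\<in>N. a i)"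
  have "S > 0" using assms(1,2) sum_nonneg[of N a] unfolding S_def by force
  then have "(\<Sum>i\<in>N. a i / S * v i) \<le> (\<Sum>i\<in>N. a i / S * B)"
    by (intro sum_mono mult_left_mono assms(3)) (use assms(1) in auto)
  also have "\<dots> = B * (\<Sum>i\<in>N. a i) / S"
    by (simp add: sum_distrib_left sum_divide_distrib mult.commute)
  also have "\<dots> = B" using \<open>S > 0\<close> by (simp add: S_def)
  finally show ?thesis unfolding S_def .
qed

lemma sampB_exp_le_increments:
  assumes "finite J" "J \<noteq> {}" "\<forall>(i, j) \<in> E. 0 \<le> x i j"
    and "finite M" "\<And>i. i \<notin> M \<Longrightarrow> w i \<le> c" "0 \<le> c"
  shows "sampB_exp J E w x t M \<le> (\<Sum>i\<in>M. w i) + real t * c"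
  using assms(4,5)
proof (induction t arbitrary: M)
  case 0
  then show ?case by simp
next
  case (Suc t M)
  have "(let N = nbr_off E j - M; S = (\<Sum>i'\<in>N. x i' j) in
        if N = {} \<or> S = 0 then sampB_exp J E w x t M
        else (\<Sum>i\<in>N. x i j / S * sampB_exp J E w x t (insert i M)))
      \<le> (\<Sum>i\<in>M. w i) + real (Suc t) * c" for j
  proof -
    have "sampB_exp J E w x t M \<le> (\<Sum>i\<in>M. w i) + real (Suc t) * c"
      using Suc.IH[OF Suc.prems] assms(6) by (simp add: algebra_simps)
    moreover have "sampB_exp J E w x t (insert i M) \<le> (\<Sum>i\<in>M. w i) + real (Suc t) * c"
      if "i \<notin> M" for i
    proof -
      have "sampB_exp J E w x t (insert i M) \<le> w i + (\<Sum>i\<in>M. w i) + real t * c"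
        using Suc.IH[of "insert i M"] Suc.prems that by (simp add: algebra_simps)
      then show ?thesis using Suc.prems(2)[OF that] by (simp add: algebra_simps)
    qed
    moreover have "0 \<le> x i j" if "i \<in> nbr_off E j" for i
      using assms(3) that by (auto simp: nbr_off_def)
    ultimately show ?thesis
      unfolding Let_def
      using weighted_mean_le[of "nbr_off E j - M" "\<lambda>i. x i j"
          "\<lambda>i. sampB_exp J E w x t (insert i M)"]
      by auto
  qed
  then have "sampB_exp J E w x (Suc t) M
      \<le> real (card J) * ((\<Sum>i\<in>M. w i) + real (Suc t) * c) / real (card J)"
    by (simp only: sampB_exp.simps) (intro divide_right_mono sum_bounded_above, auto)
  then show ?case using assms(1,2) by simp
qed

section \<open>The hard instance\<close>

definition private_nbrs :: "nat \<Rightarrow> nat \<Rightarrow> (nat \<times> nat) option set" where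
  "private_nbrs n j = (\<lambda>k. Some (j, k)) ` {1..n - 1}"

definition matched_private :: "nat \<Rightarrow> (nat \<times> nat) option set \<Rightarrow> nat \<Rightarrow> nat" where
  "matched_private n M j = card (private_nbrs n j \<inter> M)"

lemma finite_private_nbrs [simp]: "finite (private_nbrs n j)"
  by (simp add: private_nbrs_def)

lemma None_notin_private_nbrs [simp]: "None \<notin> private_nbrs n j"
  by (auto simp: private_nbrs_def)

lemma card_private_nbrs: "card (private_nbrs n j) = n - 1"
  unfolding private_nbrs_def by (subst card_image) (auto simp: inj_on_def)

lemma private_nbrs_disjoint: "i \<in> private_nbrs n j \<Longrightarrow> i \<in> private_nbrs n j' \<Longrightarrow> j = j'"
  by (auto simp: private_nbrs_def)

lemma nbr_off_inst_E: "j \<in> {1..n} \<Longrightarrow> nbr_off (inst_E n) j = insert None (private_nbrs n j)"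
  by (auto simp: nbr_off_def inst_E_def private_nbrs_def)

lemma matched_private_le: "matched_private n M j \<le> n - 1"
  unfolding matched_private_def by (metis card_private_nbrs card_mono Int_lower1 finite_private_nbrs)

lemma card_private_nbrs_Diff: "card (private_nbrs n j - M) = n - 1 - matched_private n M j"
  unfolding matched_private_def by (simp add: card_Diff_subset_Int card_private_nbrs)

lemma matched_private_insert:
  assumes "i \<in> private_nbrs n j" "i \<notin> M"
  shows "matched_private n (insert i M) j' =
    (if j' = j then Suc (matched_private n M j) else matched_private n M j')"
proof (cases "j' = j")
  case True
  then have "private_nbrs n j' \<inter> insert i M = insert i (private_nbrs n j \<inter> M)"
    using assms(1) by blast
  then show ?thesis using True assms unfolding matched_private_def by simp
next
  case False
  then have "private_nbrs n j' \<inter> insert i M = private_nbrs n j' \<inter> M"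
    using assms(1) private_nbrs_disjoint by blast
  then show ?thesis using False unfolding matched_private_def by simp
qed

lemma sampB_exp_inst_Suc:
  assumes "None \<notin> M"
  shows "sampB_exp (inst_J n) (inst_E n) w (inst_x n) (Suc t) M =
    (\<Sum>j\<in>{1..n}. (\<Sum>i\<in>insert None (private_nbrs n j - M).
        sampB_exp (inst_J n) (inst_E n) w (inst_x n) t (insert i M))
      / (real n - real (matched_private n M j))) / real n"
proof -
  have summand_eq: "(let N = nbr_off (inst_E n) j - M; S = (\<Sum>i'\<in>N. inst_x n i' j) in
        if N = {} \<or> S = 0 then sampB_exp (inst_J n) (inst_E n) w (inst_x n) t M
        else (\<Sum>i\<in>N. inst_x n i j / S * sampB_exp (inst_J n) (inst_E n) w (inst_x n) t (insert i M)))
      = (\<Sum>i\<in>insert None (private_nbrs n j - M).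
          sampB_exp (inst_J n) (inst_E n) w (inst_x n) t (insert i M))
        / (real n - real (matched_private n M j))"
    if "j \<in> inst_J n" for j
  proof -
    have j: "j \<in> {1..n}" using that by (simp add: inst_J_def)
    define N where "N = insert None (private_nbrs n j - M)"
    have unmatched: "nbr_off (inst_E n) j - M = N"
      using nbr_off_inst_E[OF j] assms unfolding N_def by auto
    have "card N = n - matched_private n M j"
      using card_private_nbrs_Diff[of n j M] matched_private_le[of n M j] j unfolding N_def by (simp; arith)
    then have card_N: "real (card N) = real n - real (matched_private n M j)"
      using matched_private_le[of n M j] by simp
    have "card N > 0" "finite N" unfolding N_def by auto
    then have S: "(\<Sum>i'\<in>N. inst_x n i' j) = real (card N) / real n" "real (card N) / real n \<noteq> 0"
      using j by (auto simp: inst_x_def)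
    have "inst_x n i j / (real (card N) / real n) = 1 / real (card N)" for i
      using j by (simp add: inst_x_def)
    then show ?thesis
      unfolding N_def[symmetric] card_N[symmetric] Let_def unmatched S using \<open>card N > 0\<close>
      by (auto simp: sum_divide_distrib)
  qed
  have card_J: "card (inst_J n) = n" by (simp add: inst_J_def)
  show ?thesis
    unfolding sampB_exp.simps card_J
    by (intro arg_cong[where f = "\<lambda>s. s / real n"] sum.cong inst_J_def summand_eq)
      (simp add: inst_J_def)
qed

section \<open>Survival of the hub\<close>

text \<open>A type with m matched private neighbours offers the hub with probability 1/(n - m),
  and 1/(n - m) = 1/n + excess n m / n^2.\<close>

definition excess :: "nat \<Rightarrow> nat \<Rightarrow> real" where
  "excess n m = real n * real m / (real n - real m)"

definition total_excess :: "nat \<Rightarrow> (nat \<times> nat) option set \<Rightarrow> real" where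
  "total_excess n M = (\<Sum>j\<in>{1..n}. excess n (matched_private n M j))"

text \<open>The recursion of err_slope absorbs the growth of total_excess by at most 1 + 2 excess
  per private match (excess_increment) and the n^-3 coming from the averaged hazard excess.\<close>

fun err_slope :: "nat \<Rightarrow> nat \<Rightarrow> real" where
  "err_slope n 0 = 0"
| "err_slope n (Suc t) = (1 + 2 / real n) * err_slope n t + 1 / real n ^ 3"

definition err_const :: "nat \<Rightarrow> nat \<Rightarrow> real" where
  "err_const n t = (\<Sum>s<t. err_slope n s)"

lemma excess_nonneg: "m < n \<Longrightarrow> 0 \<le> excess n m"
  by (simp add: excess_def)

lemma matched_private_less: "n \<ge> 1 \<Longrightarrow> matched_private n M j < n"
  using matched_private_le[of n M j] by linarith

lemma total_excess_nonneg: "n \<ge> 1 \<Longrightarrow> 0 \<le> total_excess n M"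
  unfolding total_excess_def by (intro sum_nonneg excess_nonneg matched_private_less)

lemma total_excess_empty [simp]: "total_excess n {} = 0"
  by (simp add: total_excess_def matched_private_def excess_def)

lemma total_excess_insert:
  assumes "j \<in> {1..n}" "i \<in> private_nbrs n j" "i \<notin> M"
  shows "total_excess n (insert i M) = total_excess n M
    + (excess n (Suc (matched_private n M j)) - excess n (matched_private n M j))"
proof -
  have "total_excess n (insert i M) = (\<Sum>j'\<in>{1..n}. excess n (matched_private n M j')
     + (if j' = j then excess n (Suc (matched_private n M j)) - excess n (matched_private n M j) else 0))"
    unfolding total_excess_def matched_private_insert[OF assms(2,3)] by (intro sum.cong) auto
  then show ?thesis
    using assms(1) by (simp add: total_excess_def sum.distrib)
qed

lemma err_slope_nonneg: "0 \<le> err_slope n t"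
  by (induction t) auto

lemma err_const_nonneg: "0 \<le> err_const n t"
  by (simp add: err_const_def sum_nonneg err_slope_nonneg)

lemma one_minus_inverse_diff_eq:
  assumes "m < n"
  shows "(real n - real m - 1) / (real n - real m) = 1 - 1 / real n - excess n m / real n ^ 2"
  using assms by (simp add: excess_def field_simps power2_eq_square)

lemma excess_increment:
  assumes "m < n"
  shows "(real n - real m - 1) / (real n - real m) * (excess n (Suc m) - excess n m)
    \<le> 1 + 2 * excess n m"
proof (cases "Suc m = n")
  case True
  then have "real n - real m - 1 = 0" by simp
  then show ?thesis using excess_nonneg[OF assms] by simp
next
  case False
  define k where "k = real n - real m"
  have k: "k \<ge> 2" "real n = k + real m" using assms False unfolding k_def by auto
  have "(real n - real m - 1) / (real n - real m) * (excess n (Suc m) - excess n m)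
      = real n ^ 2 / k ^ 2"
    using k unfolding excess_def k_def[symmetric] by (simp add: field_simps power2_eq_square)
  also have "\<dots> \<le> 1 + 2 * (real n * real m / k)"
  proof -
    have "k * real m * 1 \<le> k * real m * k" "real m * real m * 1 \<le> real m * real m * k"
      using k by (intro mult_left_mono; simp)+
    moreover have "0 \<le> real m * real m * k" using k by simp
    ultimately have "real n ^ 2 \<le> k ^ 2 + 2 * (real n * real m) * k"
      unfolding k(2) power2_eq_square by (simp add: algebra_simps)
    then have "real n ^ 2 / k ^ 2 \<le> (k ^ 2 + 2 * (real n * real m) * k) / k ^ 2"
      by (rule divide_right_mono) simp
    also have "\<dots> = 1 + 2 * (real n * real m / k)"
      using k by (simp add: field_simps power2_eq_square)
    finally show ?thesis .
  qed
  finally show ?thesis unfolding excess_def k_def .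
qed

lemma uniform_choice_bound:
  fixes k a e d s \<delta> f :: real
  assumes "1 \<le> k" "0 \<le> e" "0 \<le> d" "0 \<le> s" "(k - 1) / k * \<delta> \<le> 1 + 2 * f"
  shows "(1 + (k - 1) * (1 - a + e + d * (s + \<delta>))) / k
    \<le> 1 - (k - 1) / k * a + e + d * s + d * (1 + 2 * f)"
proof -
  define \<rho> where "\<rho> = (k - 1) / k"
  have \<rho>: "0 \<le> \<rho>" "\<rho> \<le> 1" using assms(1) unfolding \<rho>_def by auto
  have "(1 + (k - 1) * (1 - a + e + d * (s + \<delta>))) / k
      = 1 - \<rho> * a + \<rho> * (e + d * s) + d * (\<rho> * \<delta>)"
    using assms(1) unfolding \<rho>_def by (simp add: field_simps)
  also have "\<dots> \<le> 1 - \<rho> * a + (e + d * s) + d * (1 + 2 * f)"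
    using \<rho> assms(2-5) unfolding \<rho>_def[symmetric]
    by (intro add_mono mult_left_mono mult_left_le_one_le) auto
  finally show ?thesis unfolding \<rho>_def by simp
qed

lemma sampB_exp_hub_matched_le_one:
  assumes "n \<ge> 1" "finite M"
  shows "sampB_exp (inst_J n) (inst_E n) (\<lambda>i. of_bool (i = None)) (inst_x n) t (insert None M) \<le> 1"
proof -
  have "sampB_exp (inst_J n) (inst_E n) (\<lambda>i. of_bool (i = None)) (inst_x n) t (insert None M)
      \<le> (\<Sum>i\<in>insert None M. of_bool (i = None)) + real t * 0"
    using assms by (intro sampB_exp_le_increments) (auto simp: inst_J_def inst_x_def)
  also have "\<dots> = 1"
    using assms(2) by (simp add: sum.insert_remove sum.neutral)
  finally show ?thesis .
qed

lemma sampB_exp_hub_le: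
  assumes "n \<ge> 1" "finite M" "None \<notin> M"
  shows "sampB_exp (inst_J n) (inst_E n) (\<lambda>i. of_bool (i = None)) (inst_x n) t M
    \<le> 1 - (1 - 1 / real n) ^ t + err_const n t + err_slope n t * total_excess n M"
  using assms(2,3)
proof (induction t arbitrary: M)
  case 0
  then show ?case by (simp add: err_const_def sum.neutral)
next
  case (Suc t M)
  define H where "H = sampB_exp (inst_J n) (inst_E n) (\<lambda>i. of_bool (i = None)) (inst_x n) t"
  define a where "a = (1 - 1 / real n) ^ t"
  define e where "e = err_const n t"
  define d where "d = err_slope n t"
  define s where "s = total_excess n M"
  have n: "real n \<ge> 1" using assms(1) by simp
  have a: "0 \<le> a" "a \<le> 1" unfolding a_def using n by (auto intro: power_le_one)
  have term_le: "(\<Sum>i\<in>insert None (private_nbrs n j - M). H (insert i M)) / (real n - real c)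
      \<le> 1 - (1 - 1 / real n) * a + e + d * s + d + (a / real n ^ 2 + 2 * d) * excess n c"
    if j: "j \<in> {1..n}" and c: "c = matched_private n M j" for j c
  proof -
    define P where "P = private_nbrs n j - M"
    define k where "k = real n - real c"
    define \<delta> where "\<delta> = excess n (Suc c) - excess n c"
    have "c < n" unfolding c using matched_private_less assms(1) by blast
    have card_P: "real (card P) = k - 1"
      using card_private_nbrs_Diff[of n j M] \<open>c < n\<close> unfolding P_def k_def c by linarith
    have "H (insert i M) \<le> 1 - a + e + d * (s + \<delta>)" if "i \<in> P" for i
    proof -
      have i: "i \<in> private_nbrs n j" "i \<notin> M" using that unfolding P_def by auto
      then have "i \<noteq> None" by (metis None_notin_private_nbrs)
      then have "finite (insert i M)" "None \<notin> insert i M" using Suc.prems by auto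
      then have "H (insert i M) \<le> 1 - a + e + d * total_excess n (insert i M)"
        unfolding H_def a_def e_def d_def by (rule Suc.IH)
      then show ?thesis unfolding total_excess_insert[OF j i] s_def \<delta>_def c .
    qed
    then have "(\<Sum>i\<in>P. H (insert i M)) \<le> real (card P) * (1 - a + e + d * (s + \<delta>))"
      by (rule sum_bounded_above)
    then have "(\<Sum>i\<in>P. H (insert i M)) \<le> (k - 1) * (1 - a + e + d * (s + \<delta>))"
      unfolding card_P .
    moreover have "H (insert None M) \<le> 1"
      unfolding H_def using sampB_exp_hub_matched_le_one assms(1) Suc.prems(1) by blast
    moreover have "(\<Sum>i\<in>insert None P. H (insert i M))
        = H (insert None M) + (\<Sum>i\<in>P. H (insert i M))"
      unfolding P_def by simp
    ultimately have "(\<Sum>i\<in>insert None P. H (insert i M)) / k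
        \<le> (1 + (k - 1) * (1 - a + e + d * (s + \<delta>))) / k"
      using card_P by (intro divide_right_mono) auto
    also have "\<dots> \<le> 1 - (k - 1) / k * a + e + d * s + d * (1 + 2 * excess n c)"
      using excess_increment[OF \<open>c < n\<close>] card_P err_const_nonneg err_slope_nonneg
        total_excess_nonneg assms(1)
      unfolding k_def \<delta>_def e_def d_def s_def
      by (intro uniform_choice_bound) auto
    also have "(k - 1) / k = 1 - 1 / real n - excess n c / real n ^ 2"
      unfolding k_def using one_minus_inverse_diff_eq[OF \<open>c < n\<close>] by simp
    finally show ?thesis
      unfolding P_def k_def by (simp add: algebra_simps)
  qed
  have "sampB_exp (inst_J n) (inst_E n) (\<lambda>i. of_bool (i = None)) (inst_x n) (Suc t) M
      = (\<Sum>j\<in>{1..n}. (\<Sum>i\<in>insert None (private_nbrs n j - M). H (insert i M))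
          / (real n - real (matched_private n M j))) / real n"
    unfolding H_def using Suc.prems(2) by (rule sampB_exp_inst_Suc)
  also have "\<dots> \<le> (\<Sum>j\<in>{1..n}. 1 - (1 - 1 / real n) * a + e + d * s + d
      + (a / real n ^ 2 + 2 * d) * excess n (matched_private n M j)) / real n"
    using n by (intro divide_right_mono sum_mono term_le) auto
  also have "\<dots> = (real n * (1 - (1 - 1 / real n) * a + e + d * s + d)
      + (a / real n ^ 2 + 2 * d) * s) / real n"
    by (simp add: sum.distrib sum_distrib_left total_excess_def s_def)
  also have "\<dots> = 1 - (1 - 1 / real n) * a + e + d + d * s + (a / real n ^ 2 + 2 * d) * s / real n"
    using n by (simp add: field_simps)
  also have "\<dots> \<le> 1 - (1 - 1 / real n) ^ Suc t + err_const n (Suc t) + err_slope n (Suc t) * s"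
  proof -
    have "a * s / real n ^ 3 \<le> s / real n ^ 3"
      using a total_excess_nonneg[OF assms(1)] n unfolding s_def
      by (intro divide_right_mono mult_left_le_one_le) auto
    moreover have "(a / real n ^ 2 + 2 * d) * s / real n = a * s / real n ^ 3 + 2 * d * s / real n"
      using n by (simp add: field_simps power2_eq_square power3_eq_cube)
    moreover have "err_slope n (Suc t) * s = d * s + 2 * d * s / real n + s / real n ^ 3"
      unfolding d_def by (simp add: algebra_simps)
    moreover have "err_const n (Suc t) = e + d" and "(1 - 1 / real n) ^ Suc t = (1 - 1 / real n) * a"
      unfolding e_def d_def a_def err_const_def by simp_all
    ultimately show ?thesis by linarith
  qed
  finally show ?case unfolding s_def .
qed

lemma err_slope_le: "n \<ge> 1 \<Longrightarrow> err_slope n t \<le> real t * (1 + 2 / real n) ^ t / real n ^ 3"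
proof (induction t)
  case (Suc t)
  define q where "q = 1 + 2 / real n"
  have "1 \<le> q" unfolding q_def by simp
  then have "1 \<le> q ^ Suc t" by (rule one_le_power)
  have "err_slope n (Suc t) = q * err_slope n t + 1 / real n ^ 3" unfolding q_def by simp
  also have "\<dots> \<le> q * (real t * q ^ t / real n ^ 3) + q ^ Suc t / real n ^ 3"
    using Suc \<open>1 \<le> q\<close> \<open>1 \<le> q ^ Suc t\<close> unfolding q_def
    by (intro add_mono mult_left_mono divide_right_mono) auto
  also have "\<dots> = real (Suc t) * q ^ Suc t / real n ^ 3" by (simp add: add_divide_distrib algebra_simps)
  finally show ?case unfolding q_def .
qed simp

lemma err_const_le: "n \<ge> 1 \<Longrightarrow> err_const n n \<le> 9 / real n"
proof -
  assume n: "n \<ge> 1"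
  define q where "q = 1 + 2 / real n"
  have "1 \<le> q" unfolding q_def by simp
  have "err_const n n \<le> (\<Sum>s<n. real n * q ^ n / real n ^ 3)"
    unfolding err_const_def
  proof (intro sum_mono order.trans[OF err_slope_le[OF n]])
    fix s assume "s \<in> {..<n}"
    then show "real s * (1 + 2 / real n) ^ s / real n ^ 3 \<le> real n * q ^ n / real n ^ 3"
      using \<open>1 \<le> q\<close> unfolding q_def by (intro divide_right_mono mult_mono power_increasing) auto
  qed
  also have "\<dots> = q ^ n / real n" using n by (simp add: power2_eq_square power3_eq_cube)
  also have "q ^ n \<le> exp 2"
    unfolding q_def using exp_ge_one_plus_x_over_n_power_n[of n 2] n by simp
  also have "exp (2::real) = exp 1 * exp 1" by (simp flip: exp_add)
  also have "\<dots> \<le> 3 * 3" using exp_le by (intro mult_mono) auto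
  finally show ?thesis using n by (simp add: divide_right_mono)
qed

lemma one_minus_inverse_power_ge:
  assumes "n \<ge> 2"
  shows "exp (-1) - 2 / real n \<le> (1 - 1 / real n) ^ n"
proof -
  define x where "x = 1 / real n"
  have x: "0 \<le> x" "x \<le> 1 / 2" "real n * x = 1" unfolding x_def using assms by auto
  have "exp (-1) * (2 / real n) \<le> 2 / real n"
    by (intro mult_left_le_one_le) auto
  then have "exp (-1) - 2 / real n \<le> exp (-1) * (1 - 2 / real n)"
    by (simp add: algebra_simps)
  also have "\<dots> \<le> exp (-1) * exp (- 2 / real n)"
    using exp_ge_add_one_self[of "- 2 / real n"] by (intro mult_left_mono) auto
  also have "\<dots> = exp (real n * (- x - 2 * x\<^sup>2))"
    using assms unfolding x_def by (simp add: power2_eq_square field_simps flip: exp_add)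
  also have "\<dots> \<le> exp (real n * ln (1 - x))"
    using ln_one_minus_pos_lower_bound[OF x(1,2)] by (simp add: mult_left_mono)
  also have "\<dots> = (1 - x) ^ n"
    using x by (simp add: exp_of_nat_mult)
  finally show ?thesis unfolding x_def .
qed

lemma sampB_value_inst_x_le:
  assumes "n \<ge> 2"
  shows "sampB_value (inst_J n) (inst_E n) (inst_w n) (inst_x n) \<le> 1 - exp (-1) + 12 / real n"
proof -
  have n: "real n \<ge> 2" using assms by simp
  have "inst_w n = (\<lambda>i. of_bool (i = None) + of_bool (i \<noteq> None) / real n ^ 3)"
    by (auto simp: inst_w_def)
  then have "sampB_value (inst_J n) (inst_E n) (inst_w n) (inst_x n)
      = sampB_exp (inst_J n) (inst_E n) (\<lambda>i. of_bool (i = None)) (inst_x n) n {}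
      + sampB_exp (inst_J n) (inst_E n) (\<lambda>i. of_bool (i \<noteq> None) / real n ^ 3) (inst_x n) n {}"
    by (simp add: sampB_value_def inst_J_def sampB_exp_add)
  also have "\<dots> \<le> (1 - (1 - 1 / real n) ^ n + err_const n n) + real n * (1 / real n ^ 3)"
  proof (intro add_mono)
    show "sampB_exp (inst_J n) (inst_E n) (\<lambda>i. of_bool (i = None)) (inst_x n) n {}
        \<le> 1 - (1 - 1 / real n) ^ n + err_const n n"
      using sampB_exp_hub_le[of n "{}" n] assms by simp
    show "sampB_exp (inst_J n) (inst_E n) (\<lambda>i. of_bool (i \<noteq> None) / real n ^ 3) (inst_x n) n {}
        \<le> real n * (1 / real n ^ 3)"
      using assms
      by (intro order.trans[OF sampB_exp_le_increments[where c = "1 / real n ^ 3"]])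
        (auto simp: inst_J_def inst_x_def)
  qed
  also have "\<dots> \<le> (1 - (exp (-1) - 2 / real n) + 9 / real n) + 1 / real n"
    using one_minus_inverse_power_ge[OF assms] err_const_le[of n] assms n
    by (intro add_mono) (auto simp: power2_eq_square power3_eq_cube field_simps)
  also have "\<dots> = 1 - exp (-1) + 12 / real n" by (simp add: field_simps)
  finally show ?thesis .
qed

section \<open>The LP optimum\<close>

lemma inst_I_eq: "inst_I n = insert None (Some ` ({1..n} \<times> {1..n - 1}))"
  by (auto simp: inst_I_def)

lemma nbr_on_inst_E_None: "nbr_on (inst_E n) None = {1..n}"
  by (auto simp: nbr_on_def inst_E_def)

lemma nbr_on_inst_E_Some: "p \<in> {1..n} \<times> {1..n - 1} \<Longrightarrow> nbr_on (inst_E n) (Some p) = {fst p}"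
  by (cases p) (auto simp: nbr_on_def inst_E_def)

lemma lp_obj_inst:
  "lp_obj (inst_I n) (inst_E n) (inst_w n) y =
     (\<Sum>j\<in>{1..n}. y None j) + (\<Sum>p\<in>{1..n} \<times> {1..n - 1}. y (Some p) (fst p)) / real n ^ 3"
proof -
  define A where "A = {1..n} \<times> {1..n - 1}"
  have "finite A" unfolding A_def by simp
  then have "lp_obj (inst_I n) (inst_E n) (inst_w n) y =
      inst_w n None * (\<Sum>j\<in>nbr_on (inst_E n) None. y None j) +
      (\<Sum>p\<in>A. inst_w n (Some p) * (\<Sum>j\<in>nbr_on (inst_E n) (Some p). y (Some p) j))"
    unfolding lp_obj_def inst_I_eq A_def[symmetric] by (simp add: sum.reindex)
  also have "\<dots> = (\<Sum>j\<in>{1..n}. y None j) + (\<Sum>p\<in>A. y (Some p) (fst p) / real n ^ 3)"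
    by (simp add: nbr_on_inst_E_None nbr_on_inst_E_Some A_def inst_w_def cong: sum.cong)
  finally show ?thesis unfolding A_def by (simp add: sum_divide_distrib)
qed

lemma lp_obj_inst_x:
  assumes "n \<ge> 1"
  shows "lp_obj (inst_I n) (inst_E n) (inst_w n) (inst_x n) = 1 + 1 / real n ^ 2 - 1 / real n ^ 3"
proof -
  have "real (card ({1..n} \<times> {1..n - 1})) = real n * (real n - 1)"
    using assms by (simp add: card_cartesian_product)
  then show ?thesis
    using assms unfolding lp_obj_inst
    by (simp add: inst_x_def field_simps power2_eq_square power3_eq_cube)
qed

lemma lp_obj_inst_le:
  assumes "n \<ge> 1" and feasible: "lp_feasible K (inst_I n) (inst_J n) (inst_E n) y"
  shows "lp_obj (inst_I n) (inst_E n) (inst_w n) y \<le> 1 + 1 / real n ^ 2 - 1 / real n ^ 3"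
proof -
  define h where "h = (\<Sum>j\<in>{1..n}. y None j)"
  have "h \<le> 1"
    using feasible unfolding lp_feasible_def h_def nbr_on_inst_E_None[symmetric]
    by (auto simp: inst_I_def)
  have "y None j + (\<Sum>k\<in>{1..n - 1}. y (Some (j, k)) j) \<le> 1" if j: "j \<in> {1..n}" for j
  proof -
    have "(\<Sum>k\<in>{1..n - 1}. y (Some (j, k)) j) = (\<Sum>i\<in>private_nbrs n j. y i j)"
      unfolding private_nbrs_def by (subst sum.reindex) (auto simp: inj_on_def)
    moreover have "(\<Sum>i\<in>nbr_off (inst_E n) j. y i j) \<le> 1"
      using feasible j unfolding lp_feasible_def inst_J_def by auto
    ultimately show ?thesis unfolding nbr_off_inst_E[OF j] by simp
  qed
  then have "(\<Sum>j\<in>{1..n}. \<Sum>k\<in>{1..n - 1}. y (Some (j, k)) j)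
      \<le> (\<Sum>j\<in>{1..n}. 1 - y None j)"
    by (intro sum_mono) (simp add: algebra_simps)
  then have "(\<Sum>p\<in>{1..n} \<times> {1..n - 1}. y (Some p) (fst p)) \<le> (\<Sum>j\<in>{1..n}. 1 - y None j)"
    by (simp add: sum.cartesian_product case_prod_beta)
  also have "\<dots> = real n - h" unfolding h_def by (simp add: sum_subtractf)
  finally have "lp_obj (inst_I n) (inst_E n) (inst_w n) y \<le> h + (real n - h) / real n ^ 3"
    unfolding lp_obj_inst h_def[symmetric] using assms(1) by (simp add: divide_right_mono)
  also have "\<dots> = h * (1 - 1 / real n ^ 3) + 1 / real n ^ 2"
    using assms(1) by (simp add: field_simps power2_eq_square power3_eq_cube)
  also have "\<dots> \<le> 1 * (1 - 1 / real n ^ 3) + 1 / real n ^ 2"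
    using \<open>h \<le> 1\<close> assms(1) by (intro add_right_mono mult_right_mono) (auto simp: field_simps)
  finally show ?thesis by simp
qed

lemma card_over_le_one_minus_exp:
  assumes "2 * s \<le> n"
  shows "real s / real n \<le> 1 - exp (- real s)"
proof (cases "s = 0")
  case False
  have "real s / real n \<le> 1 / 2"
    using assms False by (simp add: field_simps)
  moreover have "exp (real s) \<ge> 2"
    using exp_ge_add_one_self[of "real s"] False by linarith
  then have "exp (- real s) \<le> 1 / 2"
    by (simp add: exp_minus field_simps)
  ultimately show ?thesis by linarith
qed simp

lemma lp_feasible_inst_x:
  assumes "n \<ge> 1" "2 * K \<le> n"
  shows "lp_feasible K (inst_I n) (inst_J n) (inst_E n) (inst_x n)"
proof -
  have "(\<Sum>i\<in>nbr_off (inst_E n) j. inst_x n i j) \<le> 1" if "j \<in> {1..n}" for j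
    using assms(1) unfolding nbr_off_inst_E[OF that]
    by (simp add: inst_x_def card_private_nbrs)
  moreover have "(\<Sum>j\<in>nbr_on (inst_E n) i. inst_x n i j) \<le> 1" if "i \<in> inst_I n" for i
    using that assms(1) unfolding inst_I_eq
    by (auto simp: nbr_on_inst_E_None nbr_on_inst_E_Some inst_x_def)
  moreover have "(\<Sum>j\<in>S. inst_x n i j) \<le> 1 - exp (- real (card S))" if "card S \<le> K" for i S
    using card_over_le_one_minus_exp[of "card S" n] that assms(2) by (simp add: inst_x_def)
  ultimately show ?thesis
    unfolding lp_feasible_def inst_J_def by (auto simp: inst_x_def)
qed

lemma lp_optimal_inst_x:
  assumes "n \<ge> 1" "2 * K \<le> n"
  shows "lp_optimal K (inst_I n) (inst_J n) (inst_E n) (inst_w n) (inst_x n)"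
  unfolding lp_optimal_def lp_obj_inst_x[OF assms(1)]
  using lp_feasible_inst_x[OF assms] lp_obj_inst_le[OF assms(1)] by blast

lemma lp_obj_inst_x_ge_one:
  assumes "n \<ge> 1"
  shows "1 \<le> lp_obj (inst_I n) (inst_E n) (inst_w n) (inst_x n)"
proof -
  have "1 / real n ^ 3 \<le> 1 / real n ^ 2"
    using assms by (intro divide_left_mono power_increasing) auto
  then show ?thesis unfolding lp_obj_inst_x[OF assms] by simp
qed

lemma sampB_inst_x_ratio:
  assumes "max 3 (2 * K) \<le> n"
  shows "lp_optimal K (inst_I n) (inst_J n) (inst_E n) (inst_w n) (inst_x n) \<and>
    lp_obj (inst_I n) (inst_E n) (inst_w n) (inst_x n) = 1 + 1 / real n ^ 2 - 1 / real n ^ 3 \<and>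
    sampB_value (inst_J n) (inst_E n) (inst_w n) (inst_x n)
      \<le> (1 - exp (-1) + 12 * ln (real n) / real n) * lp_obj (inst_I n) (inst_E n) (inst_w n) (inst_x n)"
proof -
  have n: "n \<ge> 3" "2 * K \<le> n" using assms by auto
  have "1 \<le> ln (real n)"
    using exp_le n(1) by (subst ln_ge_iff) auto
  then have "12 / real n \<le> 12 * ln (real n) / real n"
    by (simp add: divide_right_mono)
  moreover have "0 \<le> 1 - exp (-1) + 12 * ln (real n) / real n"
    using \<open>1 \<le> ln (real n)\<close> by simp
  ultimately have "sampB_value (inst_J n) (inst_E n) (inst_w n) (inst_x n)
      \<le> (1 - exp (-1) + 12 * ln (real n) / real n) * 1"
    using sampB_value_inst_x_le[of n] n(1) by simp
  also have "\<dots> \<le> (1 - exp (-1) + 12 * ln (real n) / real n)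
      * lp_obj (inst_I n) (inst_E n) (inst_w n) (inst_x n)"
    using \<open>0 \<le> 1 - exp (-1) + 12 * ln (real n) / real n\<close> lp_obj_inst_x_ge_one n(1)
    by (intro mult_left_mono) auto
  finally show ?thesis
    using lp_optimal_inst_x lp_obj_inst_x n by auto
qed

lemma sampB_ratio_not_above_one_minus_inverse_e:
  assumes "c > 1 - exp (-1)"
  shows "\<exists>n \<ge> 2. \<exists>x. lp_optimal K (inst_I n) (inst_J n) (inst_E n) (inst_w n) x \<and>
    sampB_value (inst_J n) (inst_E n) (inst_w n) x < c * lp_obj (inst_I n) (inst_E n) (inst_w n) x"
proof -
  define \<delta> where "\<delta> = c - (1 - exp (-1))"
  have "0 < \<delta>" using assms unfolding \<delta>_def by simp
  obtain m :: nat where "12 / \<delta> < real m"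
    using reals_Archimedean2 by blast
  define n where "n = max m (max 3 (2 * K))"
  have n: "n \<ge> 3" "2 * K \<le> n" unfolding n_def by auto
  have "12 / \<delta> < real n" using \<open>12 / \<delta> < real m\<close> unfolding n_def by linarith
  then have "12 / real n < \<delta>"
    using \<open>0 < \<delta>\<close> n by (simp add: divide_less_eq mult.commute)
  then have "sampB_value (inst_J n) (inst_E n) (inst_w n) (inst_x n) < c"
    using sampB_value_inst_x_le[of n] n unfolding \<delta>_def by linarith
  also have "c \<le> c * lp_obj (inst_I n) (inst_E n) (inst_w n) (inst_x n)"
  proof -
    have "0 \<le> 1 - exp (-1::real)" by simp
    then have "0 < c" using assms by linarith
    then show ?thesis
      using lp_obj_inst_x_ge_one[of n] n by (simp add: mult_le_cancel_left1)
  qed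
  finally have "sampB_value (inst_J n) (inst_E n) (inst_w n) (inst_x n)
      < c * lp_obj (inst_I n) (inst_E n) (inst_w n) (inst_x n)" .
  then show ?thesis
    using lp_optimal_inst_x[of n K] n by (intro exI[of _ n] exI[of _ "inst_x n"]) auto
qed

theorem mainTheorem10:
  fixes K :: nat
  assumes "K \<ge> 1"
  shows "(\<exists>N0 C. \<forall>n \<ge> N0.
            lp_optimal K (inst_I n) (inst_J n) (inst_E n) (inst_w n) (inst_x n) \<and>
            lp_obj (inst_I n) (inst_E n) (inst_w n) (inst_x n) = 1 + 1 / real n ^ 2 - 1 / real n ^ 3 \<and>
            sampB_value (inst_J n) (inst_E n) (inst_w n) (inst_x n)
              \<le> (1 - exp (-1) + C * ln (real n) / real n) *
                 lp_obj (inst_I n) (inst_E n) (inst_w n) (inst_x n))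
       \<and> (\<forall>c > 1 - exp (-1). \<exists>n \<ge> 2. \<exists>x.
            lp_optimal K (inst_I n) (inst_J n) (inst_E n) (inst_w n) x \<and>
            sampB_value (inst_J n) (inst_E n) (inst_w n) x < c * lp_obj (inst_I n) (inst_E n) (inst_w n) x)"
  using sampB_inst_x_ratio sampB_ratio_not_above_one_minus_inverse_e by blast

end
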